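(* If $n\ge1$ and $m\ge 2$ are both odd, then $K(\mathbb{Z}_m^n)=\mathbb{Z}_m^n$.
   Context: The Ducci function $D:\mathbb{Z}_m^n\to\mathbb{Z}_m^n$ is $D(x_1,\dots,x_n)=(x_1+x_2,\,x_2+x_3,\,\dots,\,x_{n-1}+x_n,\,x_n+x_1)$, entries mod $m$. $K(\mathbb{Z}_m^n)$ is the set of $\mathbf{u}\in\mathbb{Z}_m^n$ lying in the Ducci cycle of some tuple, i.e. the set of $\mathbf{u}$ with $D^k(\mathbf{u})=\mathbf{u}$ for some $k\ge1$. *)

theory Defs
  imports Main
begin

text \<open>n-tuples over Z_m are represented as functions nat \<Rightarrow> int whose entries at
indices 0..n-1 lie in {0..<m} and which vanish at indices \<ge> n.\<close>

definition tuples :: "nat \<Rightarrow> nat \<Rightarrow> (nat \<Rightarrow> int) set" where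
  "tuples m n = {x. (\<forall>i<n. 0 \<le> x i \<and> x i < int m) \<and> (\<forall>i\<ge>n. x i = 0)}"

definition ducci :: "nat \<Rightarrow> nat \<Rightarrow> (nat \<Rightarrow> int) \<Rightarrow> (nat \<Rightarrow> int)" where
  "ducci m n x = (\<lambda>i. if i < n then (x i + x ((i + 1) mod n)) mod int m else 0)"

definition ducci_K :: "nat \<Rightarrow> nat \<Rightarrow> (nat \<Rightarrow> int) set" where
  "ducci_K m n = {u \<in> tuples m n. \<exists>k\<ge>1. (ducci m n ^^ k) u = u}"

end

theory Submission
  imports Defs "HOL-Combinatorics.Permutations"
begin

text \<open>For odd \<open>n\<close> and odd \<open>m\<close> the Ducci map is injective on \<open>\<int>\<^sub>m\<^sup>n\<close>: if two tuples have the
same image, their difference \<open>z\<close> satisfies \<open>z\<^sub>i \<equiv> -z\<^sub>i\<^sub>+\<^sub>1\<close>, so \<open>z\<^sub>i \<equiv> (-1)\<^sup>i z\<^sub>0\<close>, and going once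
around the odd cycle gives \<open>z\<^sub>0 \<equiv> -z\<^sub>0\<close>, i.e. \<open>m\<close> divides \<open>2 z\<^sub>0\<close> and hence \<open>z\<^sub>0\<close>.
An injective self-map of a finite set is a permutation, so every tuple lies on a cycle.\<close>

lemma funpow_restrict_id_eq:
  assumes "f ` S \<subseteq> S" "x \<in> S"
  shows "(restrict_id f S ^^ k) x = (f ^^ k) x"
proof -
  have "(f ^^ k) x \<in> S" for k
    using assms by (induction k) auto
  then show ?thesis
    by (induction k) (auto simp: restrict_id_def)
qed

lemma periodic_point_of_inj_on_finite:
  assumes "finite S" "f ` S \<subseteq> S" "inj_on f S" "x \<in> S"
  obtains k where "k > 0" "(f ^^ k) x = x"
proof -
  have "bij_betw f S S"
    using endo_inj_surj[OF assms(1-3)] assms(3) by (simp add: bij_betw_def)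
  then have "permutation (restrict_id f S)"
    using assms(1) permutes_restrict_id permutes_imp_permutation by blast
  then obtain k where "k > 0" "(restrict_id f S ^^ k) x = x"
    by (rule permutation_self)
  with that show thesis
    using funpow_restrict_id_eq[OF assms(2,4)] by simp
qed

lemma dvd_alternating_of_dvd_neighbour_sums:
  fixes a :: int and z :: "nat \<Rightarrow> int"
  assumes "\<And>i. i < k \<Longrightarrow> a dvd z i + z (Suc i)" "i \<le> k"
  shows "a dvd z i - (-1) ^ i * z 0"
  using assms(2)
proof (induction i)
  case (Suc i)
  have "a dvd (z i + z (Suc i)) - (z i - (-1) ^ i * z 0)"
  proof (rule dvd_diff)
    show "a dvd z i + z (Suc i)"
      using assms(1) Suc.prems by simp
    show "a dvd z i - (-1) ^ i * z 0"
      using Suc by simp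
  qed
  also have "(z i + z (Suc i)) - (z i - (-1) ^ i * z 0) = z (Suc i) - (-1) ^ Suc i * z 0"
    by simp
  finally show ?case .
qed simp

lemma dvd_of_dvd_cyclic_neighbour_sums:
  fixes a :: int and z :: "nat \<Rightarrow> int"
  assumes "odd n" "coprime a 2" "\<And>i. i < n \<Longrightarrow> a dvd z i + z (Suc i mod n)" "i < n"
  shows "a dvd z i"
proof -
  have alternating: "a dvd z j - (-1) ^ j * z 0" if "j \<le> n - 1" for j
  proof (rule dvd_alternating_of_dvd_neighbour_sums[OF _ that])
    show "a dvd z j + z (Suc j)" if "j < n - 1" for j
      using assms(3)[of j] that by simp
  qed
  have "a dvd (z (n - 1) + z 0) - (z (n - 1) - z 0)"
  proof (rule dvd_diff)
    show "a dvd z (n - 1) + z 0"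
      using assms(1) assms(3)[of "n - 1"] by (simp add: odd_pos)
    show "a dvd z (n - 1) - z 0"
      using assms(1) alternating[of "n - 1"] by simp
  qed
  then have "a dvd 2 * z 0"
    by simp
  then have "a dvd z 0"
    using assms(2) coprime_dvd_mult_right_iff by blast
  then have "a dvd (z i - (-1) ^ i * z 0) + (-1) ^ i * z 0"
    using alternating assms(4) by (intro dvd_add) auto
  then show ?thesis
    by simp
qed

lemma finite_tuples: "finite (tuples m n)"
proof (rule finite_subset)
  let ?F = "{f. \<forall>i. (i \<in> {..<n} \<longrightarrow> f i \<in> {0..<int m}) \<and> (i \<notin> {..<n} \<longrightarrow> f i = 0)}"
  show "tuples m n \<subseteq> ?F"
    by (auto simp: tuples_def)
  show "finite ?F"
    by (rule finite_set_of_finite_funs) auto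
qed

lemma ducci_in_tuples: "m > 0 \<Longrightarrow> x \<in> tuples m n \<Longrightarrow> ducci m n x \<in> tuples m n"
  by (auto simp: tuples_def ducci_def)

lemma inj_on_ducci:
  assumes "odd n" "odd m"
  shows "inj_on (ducci m n) (tuples m n)"
proof (rule inj_onI)
  fix x y
  assume x: "x \<in> tuples m n" and y: "y \<in> tuples m n" and eq: "ducci m n x = ducci m n y"
  define z where "z i = x i - y i" for i
  have "int m dvd z i + z (Suc i mod n)" if "i < n" for i
  proof -
    have "(x i + x (Suc i mod n)) mod int m = (y i + y (Suc i mod n)) mod int m"
      using fun_cong[OF eq, of i] that by (simp add: ducci_def)
    then have "int m dvd (x i + x (Suc i mod n)) - (y i + y (Suc i mod n))"
      by (simp only: mod_eq_dvd_iff)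
    then show ?thesis
      by (simp add: z_def algebra_simps)
  qed
  moreover have "coprime (int m) 2"
    using assms(2) by simp
  ultimately have "int m dvd z i" if "i < n" for i
    using dvd_of_dvd_cyclic_neighbour_sums[OF assms(1)] that by blast
  then have congruent: "x i mod int m = y i mod int m" if "i < n" for i
    using that by (simp add: z_def mod_eq_dvd_iff)
  show "x = y"
  proof
    fix i
    show "x i = y i"
    proof (cases "i < n")
      case True
      with x y congruent[OF True] show ?thesis
        by (simp add: tuples_def mod_pos_pos_trivial)
    next
      case False
      with x y show ?thesis
        by (simp add: tuples_def)
    qed
  qed
qed

theorem corollary2p3:
  fixes m n :: nat
  assumes "n \<ge> 1" and "m \<ge> 2" and "odd n" and "odd m"
  shows "ducci_K m n = tuples m n"
proof
  show "ducci_K m n \<subseteq> tuples m n"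
    by (auto simp: ducci_K_def)
  show "tuples m n \<subseteq> ducci_K m n"
  proof
    fix u
    assume u: "u \<in> tuples m n"
    have maps_to: "ducci m n ` tuples m n \<subseteq> tuples m n"
      using ducci_in_tuples assms(2) by auto
    obtain k where "k > 0" "(ducci m n ^^ k) u = u"
      using periodic_point_of_inj_on_finite[OF finite_tuples maps_to inj_on_ducci[OF assms(3,4)] u] .
    with u show "u \<in> ducci_K m n"
      by (auto simp: ducci_K_def Suc_le_eq)
  qed
qed

end
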